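(* Let $D$ be a (smooth, generic) diagram of a knot in $\mathbb{R}^2$. For every double point of $D$ there exists an intersection parallelogram.
   Context: An intersection parallelogram for a knot diagram $D$ is a parallelogram $P$ with two horizontal sides such that: $P$ contains exactly one double point of $D$ and exactly two arcs of $D$ in its interior; one arc (the vertical arc) meets each of the two horizontal sides exactly once; the other arc (the horizontal arc) meets each of the other two parallel sides exactly once; and the arcs do not pass through the corners of $P$. *)

theory Defs
  imports "HOL-Analysis.Analysis"
begin

text \<open>The plane R^2 is identified with the complex numbers. A knot diagram is
  given by a 1-periodic smooth (C-infinity) closed curve.\<close>

definition smooth_curve :: "(real \<Rightarrow> complex) \<Rightarrow> bool" where
  "smooth_curve \<gamma> \<longleftrightarrow> (\<exists>f :: nat \<Rightarrow> real \<Rightarrow> complex. f 0 = \<gamma> \<and>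
      (\<forall>k t. (f k has_vector_derivative f (Suc k) t) (at t)))"

definition is_double_point :: "(real \<Rightarrow> complex) \<Rightarrow> complex \<Rightarrow> bool" where
  "is_double_point \<gamma> p \<longleftrightarrow> (\<exists>s t. 0 \<le> s \<and> s < 1 \<and> 0 \<le> t \<and> t < 1 \<and> s \<noteq> t \<and> \<gamma> s = p \<and> \<gamma> t = p)"

definition knot_diagram :: "(real \<Rightarrow> complex) \<Rightarrow> bool" where
  "knot_diagram \<gamma> \<longleftrightarrow>
     (\<forall>t. \<gamma> (t + 1) = \<gamma> t) \<and>
     smooth_curve \<gamma> \<and>
     (\<forall>t. vector_derivative \<gamma> (at t) \<noteq> 0) \<and>
     (\<forall>s t. 0 \<le> s \<and> s < 1 \<and> 0 \<le> t \<and> t < 1 \<and> s \<noteq> t \<and> \<gamma> s = \<gamma> t \<longrightarrow>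
        Im (cnj (vector_derivative \<gamma> (at s)) * vector_derivative \<gamma> (at t)) \<noteq> 0) \<and>
     (\<forall>r s t. 0 \<le> r \<and> r < 1 \<and> 0 \<le> s \<and> s < 1 \<and> 0 \<le> t \<and> t < 1 \<and>
        r \<noteq> s \<and> r \<noteq> t \<and> s \<noteq> t \<longrightarrow> \<not> (\<gamma> r = \<gamma> s \<and> \<gamma> s = \<gamma> t))"

definition par_pt :: "complex \<Rightarrow> real \<Rightarrow> complex \<Rightarrow> real \<Rightarrow> real \<Rightarrow> complex" where
  "par_pt c w v a b = c + of_real (a * w) + of_real b * v"

definition par_closed :: "complex \<Rightarrow> real \<Rightarrow> complex \<Rightarrow> complex set" where
  "par_closed c w v = {par_pt c w v a b | a b. 0 \<le> a \<and> a \<le> 1 \<and> 0 \<le> b \<and> b \<le> 1}"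

definition par_interior :: "complex \<Rightarrow> real \<Rightarrow> complex \<Rightarrow> complex set" where
  "par_interior c w v = {par_pt c w v a b | a b. 0 < a \<and> a < 1 \<and> 0 < b \<and> b < 1}"

definition par_bottom :: "complex \<Rightarrow> real \<Rightarrow> complex \<Rightarrow> complex set" where
  "par_bottom c w v = {par_pt c w v a 0 | a. 0 < a \<and> a < 1}"

definition par_top :: "complex \<Rightarrow> real \<Rightarrow> complex \<Rightarrow> complex set" where
  "par_top c w v = {par_pt c w v a 1 | a. 0 < a \<and> a < 1}"

definition par_left :: "complex \<Rightarrow> real \<Rightarrow> complex \<Rightarrow> complex set" where
  "par_left c w v = {par_pt c w v 0 b | b. 0 < b \<and> b < 1}"

definition par_right :: "complex \<Rightarrow> real \<Rightarrow> complex \<Rightarrow> complex set" where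
  "par_right c w v = {par_pt c w v 1 b | b. 0 < b \<and> b < 1}"

text \<open>Intersection parallelogram (sides given without corners, so endpoints of
  the arcs avoid the corners).\<close>

definition intersection_parallelogram ::
    "(real \<Rightarrow> complex) \<Rightarrow> complex \<Rightarrow> complex \<Rightarrow> real \<Rightarrow> complex \<Rightarrow> bool" where
  "intersection_parallelogram \<gamma> p c w v \<longleftrightarrow>
     w > 0 \<and> Im v > 0 \<and>
     {q \<in> par_closed c w v. is_double_point \<gamma> q} = {p} \<and>
     (\<exists>t1 u1 t2 u2. t1 < u1 \<and> u1 < t2 \<and> t2 < u2 \<and> u2 < t1 + 1 \<and>
        {t. \<gamma> t \<in> par_closed c w v} =
          (\<Union>k::int. {t1 + of_int k .. u1 + of_int k} \<union> {t2 + of_int k .. u2 + of_int k}) \<and>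
        \<gamma> ` {t1<..<u1} \<subseteq> par_interior c w v \<and>
        \<gamma> ` {t2<..<u2} \<subseteq> par_interior c w v \<and>
        ((\<gamma> t1 \<in> par_bottom c w v \<and> \<gamma> u1 \<in> par_top c w v) \<or>
         (\<gamma> t1 \<in> par_top c w v \<and> \<gamma> u1 \<in> par_bottom c w v)) \<and>
        ((\<gamma> t2 \<in> par_left c w v \<and> \<gamma> u2 \<in> par_right c w v) \<or>
         (\<gamma> t2 \<in> par_right c w v \<and> \<gamma> u2 \<in> par_left c w v)))"

end

theory Submission
  imports Defs "HOL-Library.Periodic_Fun"
begin

text \<open>
  Near a double point \<open>p\<close> the diagram consists of two branches, through parameters \<open>s\<close>
  and \<open>t\<close>, with transverse tangents; choose \<open>s\<close> so that its branch is not horizontal.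
  In the oblique coordinates \<open>(X, Y)\<close> of \<open>\<gamma> - p\<close> with respect to the basis \<open>(1, v)\<close>,
  \<open>v\<close> the tangent at \<open>s\<close>, the branch through \<open>s\<close> moves in \<open>Y\<close> at speed about 1 and
  barely in \<open>X\<close>, while the branch through \<open>t\<close> moves in \<open>X\<close> at a speed \<open>\<alpha> > 0\<close> and
  in \<open>Y\<close> at speed at most \<open>M\<close>.  Hence in a thin box \<open>|X| \<le> \<epsilon>, |Y| \<le> \<delta>\<close> with
  \<open>\<kappa>\<delta> \<ll> \<epsilon> \<ll> \<alpha>\<delta>/M\<close> the first branch is an arc joining the horizontal sides, the
  second an arc joining the other two sides, and the two meet only at \<open>p\<close>; a small box also
  avoids the compact rest of the curve.
\<close>

section \<open>Real functions with bounded derivatives\<close>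

lemma increment_ge_of_deriv_ge:
  fixes F F' :: "real \<Rightarrow> real"
  assumes deriv: "\<And>x. x \<in> {a..b} \<Longrightarrow> (F has_real_derivative F' x) (at x)"
    and lower: "\<And>x. x \<in> {a..b} \<Longrightarrow> m \<le> F' x"
    and "a \<le> x" "x \<le> y" "y \<le> b"
  shows "m * (y - x) \<le> F y - F x"
proof -
  have "F x - m * x \<le> F y - m * y"
  proof (rule DERIV_nonneg_imp_nondecreasing[of x y "\<lambda>z. F z - m * z"])
    fix z assume "x \<le> z" "z \<le> y"
    with assms show "\<exists>d. ((\<lambda>z. F z - m * z) has_real_derivative d) (at z) \<and> 0 \<le> d"
      by (intro exI[of _ "F' z - m"]) (auto intro!: derivative_eq_intros)
  qed fact
  then show ?thesis by (simp add: algebra_simps)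
qed

lemma strict_mono_on_of_deriv_pos:
  fixes F F' :: "real \<Rightarrow> real"
  assumes "\<And>x. x \<in> {a..b} \<Longrightarrow> (F has_real_derivative F' x) (at x) \<and> 0 < F' x"
  shows "strict_mono_on {a..b} F"
proof (rule strict_mono_onI)
  fix x y assume x: "x \<in> {a..b}" and y: "y \<in> {a..b}" and "x < y"
  show "F x < F y"
  proof (rule DERIV_pos_imp_increasing[OF \<open>x < y\<close>])
    fix z assume "x \<le> z" "z \<le> y"
    with x y have "z \<in> {a..b}"
      by auto
    with assms show "\<exists>d. (F has_real_derivative d) (at z) \<and> 0 < d"
      by blast
  qed
qed

lemma dist_le_of_deriv_ge:
  fixes F F' :: "real \<Rightarrow> real"
  assumes deriv: "\<And>x. x \<in> {c-\<eta>..c+\<eta>} \<Longrightarrow> (F has_real_derivative F' x) (at x)"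
    and lower: "\<And>x. x \<in> {c-\<eta>..c+\<eta>} \<Longrightarrow> m \<le> F' x"
    and "F c = 0" "x \<in> {c-\<eta>..c+\<eta>}"
  shows "m * \<bar>x - c\<bar> \<le> \<bar>F x\<bar>"
proof (cases "x \<le> c")
  case True
  then have "m * (c - x) \<le> F c - F x"
    using assms(4) by (intro increment_ge_of_deriv_ge[OF deriv lower]) auto
  with True assms(3) show ?thesis
    by simp
next
  case False
  then have "m * (x - c) \<le> F x - F c"
    using assms(4) by (intro increment_ge_of_deriv_ge[OF deriv lower]) auto
  with False assms(3) show ?thesis
    by simp
qed

lemma abs_le_of_deriv_bounded:
  fixes G G' :: "real \<Rightarrow> real"
  assumes "\<And>x. x \<in> {c-\<eta>..c+\<eta>} \<Longrightarrow> (G has_real_derivative G' x) (at x)"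
    and "\<And>x. x \<in> {c-\<eta>..c+\<eta>} \<Longrightarrow> \<bar>G' x\<bar> \<le> k"
    and "G c = 0" "x \<in> {c-\<eta>..c+\<eta>}"
  shows "\<bar>G x\<bar> \<le> k * \<bar>x - c\<bar>"
  using field_differentiable_bound[of "{c-\<eta>..c+\<eta>}" G G' k x c] assms
  by (auto intro: has_field_derivative_at_within)

lemma level_interval:
  fixes F F' :: "real \<Rightarrow> real"
  assumes deriv: "\<And>x. x \<in> {c-\<eta>..c+\<eta>} \<Longrightarrow> (F has_real_derivative F' x) (at x)"
    and lower: "\<And>x. x \<in> {c-\<eta>..c+\<eta>} \<Longrightarrow> m \<le> F' x"
    and "0 < m" "F c = 0" "0 < \<delta>" "\<delta> \<le> m * \<eta>"
  obtains lo hi where "c - \<eta> \<le> lo" "lo < c" "c < hi" "hi \<le> c + \<eta>" "F lo = -\<delta>" "F hi = \<delta>"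
    "{x \<in> {c-\<eta>..c+\<eta>}. \<bar>F x\<bar> \<le> \<delta>} = {lo..hi}"
    "{x \<in> {c-\<eta>..c+\<eta>}. \<bar>F x\<bar> < \<delta>} = {lo<..<hi}"
proof -
  have "0 < \<eta>"
    using assms(3,5,6) zero_less_mult_pos[of m \<eta>] by linarith
  have mono: "strict_mono_on {c-\<eta>..c+\<eta>} F"
  proof (rule strict_mono_on_of_deriv_pos)
    fix x assume "x \<in> {c-\<eta>..c+\<eta>}"
    then show "(F has_real_derivative F' x) (at x) \<and> 0 < F' x"
      using deriv lower \<open>0 < m\<close> by (simp add: order.strict_trans2)
  qed
  have cont: "\<forall>x. c - \<eta> \<le> x \<and> x \<le> c + \<eta> \<longrightarrow> isCont F x"
    using deriv DERIV_isCont by force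
  have "m * ((c+\<eta>) - c) \<le> F (c+\<eta>) - F c"
    by (rule increment_ge_of_deriv_ge[OF deriv lower]) (use \<open>0 < \<eta>\<close> in auto)
  moreover have "m * (c - (c-\<eta>)) \<le> F c - F (c-\<eta>)"
    by (rule increment_ge_of_deriv_ge[OF deriv lower]) (use \<open>0 < \<eta>\<close> in auto)
  ultimately have "\<delta> \<le> F (c+\<eta>)" "F (c-\<eta>) \<le> -\<delta>"
    using assms(4,6) by auto
  then obtain lo hi where lo: "c - \<eta> \<le> lo" "lo \<le> c" "F lo = -\<delta>"
    and hi: "c \<le> hi" "hi \<le> c + \<eta>" "F hi = \<delta>"
    using IVT[of F "c-\<eta>" "-\<delta>" c] IVT[of F c \<delta> "c+\<eta>"] cont assms(4,5) \<open>0 < \<eta>\<close> by auto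
  have lo_mem: "lo \<in> {c-\<eta>..c+\<eta>}" and hi_mem: "hi \<in> {c-\<eta>..c+\<eta>}"
    using lo hi by auto
  have le: "\<bar>F x\<bar> \<le> \<delta> \<longleftrightarrow> lo \<le> x \<and> x \<le> hi" and less: "\<bar>F x\<bar> < \<delta> \<longleftrightarrow> lo < x \<and> x < hi"
    if "x \<in> {c-\<eta>..c+\<eta>}" for x
    using strict_mono_on_less_eq[OF mono lo_mem that] strict_mono_on_less_eq[OF mono that hi_mem]
      strict_mono_on_less[OF mono lo_mem that] strict_mono_on_less[OF mono that hi_mem] lo(3) hi(3)
    by auto
  have "lo < c" "c < hi"
    using lo hi assms(4,5) by (auto simp: order.order_iff_strict)
  moreover have "{x \<in> {c-\<eta>..c+\<eta>}. \<bar>F x\<bar> \<le> \<delta>} = {lo..hi}"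
    using le lo_mem hi_mem by auto
  moreover have "{x \<in> {c-\<eta>..c+\<eta>}. \<bar>F x\<bar> < \<delta>} = {lo<..<hi}"
    using less lo_mem hi_mem by auto
  ultimately show thesis
    using that lo(1,3) hi(2,3) by blast
qed

lemma transverse_crossing:
  fixes x y a b s t m1 m2 k1 k2 :: real
  assumes "m1 * \<bar>a - s\<bar> \<le> \<bar>y\<bar>" "\<bar>x\<bar> \<le> k1 * \<bar>a - s\<bar>"
    and "m2 * \<bar>b - t\<bar> \<le> \<bar>x\<bar>" "\<bar>y\<bar> \<le> k2 * \<bar>b - t\<bar>"
    and "0 < m1" "0 \<le> k1" "k1 * k2 < m1 * m2"
  shows "a = s \<and> b = t"
proof -
  have "m1 * (m2 * \<bar>b - t\<bar>) \<le> m1 * (k1 * \<bar>a - s\<bar>)"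
    using assms(2,3,5) by (intro mult_left_mono) auto
  also have "\<dots> = k1 * (m1 * \<bar>a - s\<bar>)"
    by simp
  also have "\<dots> \<le> k1 * (k2 * \<bar>b - t\<bar>)"
    using assms(1,4,6) by (intro mult_left_mono) auto
  finally have "(m1 * m2 - k1 * k2) * \<bar>b - t\<bar> \<le> 0"
    by (simp add: algebra_simps)
  with assms(7) have "b = t"
    by (simp add: mult_le_0_iff)
  with assms(1,4,5) show ?thesis
    by (simp add: mult_le_0_iff)
qed

lemma periodic_preimage:
  fixes \<gamma> :: "real \<Rightarrow> 'a"
  assumes "periodic_fun_simple' \<gamma>"
    and "T \<subseteq> {a..<a+1}" "\<And>y. y \<in> {a..<a+1} \<Longrightarrow> \<gamma> y \<in> X \<longleftrightarrow> y \<in> T"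
  shows "{t. \<gamma> t \<in> X} = {t. \<exists>k::int. t - of_int k \<in> T}"
proof -
  interpret per: periodic_fun_simple' \<gamma> by fact
  have "\<gamma> t \<in> X \<longleftrightarrow> t - of_int \<lfloor>t - a\<rfloor> \<in> T" for t
  proof -
    have "t - of_int \<lfloor>t - a\<rfloor> \<in> {a..<a+1}"
      using of_int_floor_le[of "t - a"] real_of_int_floor_add_one_gt[of "t - a"]
      by (simp add: algebra_simps)
    from assms(3)[OF this] show ?thesis
      using per.minus_of_int[of t "\<lfloor>t - a\<rfloor>"] by simp
  qed
  moreover have "t - of_int k \<in> T \<Longrightarrow> \<gamma> t \<in> X" for t k
    using assms(2) assms(3)[of "t - of_int k"] per.minus_of_int[of t k] by auto
  ultimately show ?thesis
    by blast
qed

lemma eq_of_diff_Ints_unit_interval: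
  fixes x y :: real
  assumes "x \<in> {0..<1}" "y \<in> {0..<1}" "x - y \<in> \<int>"
  shows "x = y"
  using assms frac_unique_iff[of x y] frac_eq_id[of x] by simp

section \<open>Oblique coordinates and centred parallelograms\<close>

definition hcoord :: "complex \<Rightarrow> complex \<Rightarrow> real" where
  "hcoord v z = Re z - Im z / Im v * Re v"

definition vcoord :: "complex \<Rightarrow> complex \<Rightarrow> real" where
  "vcoord v z = Im z / Im v"

lemma oblique_decomposition:
  "Im v \<noteq> 0 \<Longrightarrow> z = of_real (hcoord v z) + of_real (vcoord v z) * v"
  by (simp add: hcoord_def vcoord_def complex_eq_iff field_simps)

lemma norm_le_coords:
  assumes "Im v \<noteq> 0"
  shows "cmod z \<le> \<bar>hcoord v z\<bar> + \<bar>vcoord v z\<bar> * cmod v"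
proof -
  have "cmod z = cmod (of_real (hcoord v z) + of_real (vcoord v z) * v)"
    using oblique_decomposition[OF assms] by simp
  also have "\<dots> \<le> \<bar>hcoord v z\<bar> + \<bar>vcoord v z\<bar> * cmod v"
    by (metis norm_mult norm_of_real norm_triangle_ineq)
  finally show ?thesis .
qed

lemma hcoord_eq_Im_cnj_mult: "Im v \<noteq> 0 \<Longrightarrow> hcoord v z = - Im (cnj v * z) / Im v"
  by (simp add: hcoord_def field_simps)

lemma coords_oblique_combination:
  assumes "Im v \<noteq> 0"
  shows "hcoord v (of_real x + of_real y * v) = x" and "vcoord v (of_real x + of_real y * v) = y"
  using assms by (simp_all add: hcoord_def vcoord_def)

lemma bounded_linear_vcoord: "bounded_linear (vcoord v)"
  unfolding vcoord_def[abs_def]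
  by (intro bounded_linear_compose[OF bounded_linear_divide bounded_linear_Im])

lemma bounded_linear_hcoord: "bounded_linear (hcoord v)"
  unfolding hcoord_def[abs_def]
  by (intro bounded_linear_sub bounded_linear_Re
      bounded_linear_compose[OF bounded_linear_mult_left bounded_linear_compose[OF bounded_linear_divide bounded_linear_Im]])

lemma has_real_derivative_coords:
  assumes "(\<gamma> has_vector_derivative d) (at x)"
  shows "((\<lambda>x. hcoord v (\<gamma> x - p)) has_real_derivative hcoord v d) (at x)"
    and "((\<lambda>x. vcoord v (\<gamma> x - p)) has_real_derivative vcoord v d) (at x)"
proof -
  have "((\<lambda>x. \<gamma> x - p) has_vector_derivative d) (at x)"
    using assms by (auto intro!: derivative_eq_intros)
  then show "((\<lambda>x. hcoord v (\<gamma> x - p)) has_real_derivative hcoord v d) (at x)"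
    and "((\<lambda>x. vcoord v (\<gamma> x - p)) has_real_derivative vcoord v d) (at x)"
    using bounded_linear.has_vector_derivative[OF bounded_linear_hcoord]
      bounded_linear.has_vector_derivative[OF bounded_linear_vcoord]
    by (auto simp: has_real_derivative_iff_has_vector_derivative)
qed

lemma par_pt_centred_iff:
  assumes "Im v \<noteq> 0"
  shows "z = par_pt (p - of_real \<epsilon> - of_real \<delta> * v) (2*\<epsilon>) (of_real (2*\<delta>) * v) a b \<longleftrightarrow>
    hcoord v (z - p) = (2*a - 1) * \<epsilon> \<and> vcoord v (z - p) = (2*b - 1) * \<delta>"
proof -
  define x y where "x = (2*a - 1) * \<epsilon>" and "y = (2*b - 1) * \<delta>"
  have "par_pt (p - of_real \<epsilon> - of_real \<delta> * v) (2*\<epsilon>) (of_real (2*\<delta>) * v) a b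
      = p + (of_real x + of_real y * v)"
    by (simp add: par_pt_def x_def y_def algebra_simps)
  moreover have "z = p + (of_real x + of_real y * v) \<longleftrightarrow> hcoord v (z - p) = x \<and> vcoord v (z - p) = y"
  proof
    assume "z = p + (of_real x + of_real y * v)"
    then show "hcoord v (z - p) = x \<and> vcoord v (z - p) = y"
      using coords_oblique_combination[OF assms] by simp
  next
    assume "hcoord v (z - p) = x \<and> vcoord v (z - p) = y"
    then have "z - p = of_real x + of_real y * v"
      using oblique_decomposition[OF assms, of "z - p"] by simp
    then show "z = p + (of_real x + of_real y * v)"
      by (simp add: algebra_simps)
  qed
  ultimately show ?thesis
    unfolding x_def y_def by (simp only:)
qed

lemma ex_centred_par_pt_iff:
  assumes "Im v \<noteq> 0" "\<epsilon> \<noteq> 0" "\<delta> \<noteq> 0"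
  shows "(\<exists>a b. z = par_pt (p - of_real \<epsilon> - of_real \<delta> * v) (2*\<epsilon>) (of_real (2*\<delta>) * v) a b \<and> P a b)
    \<longleftrightarrow> P ((hcoord v (z - p) / \<epsilon> + 1) / 2) ((vcoord v (z - p) / \<delta> + 1) / 2)"
    (is "_ \<longleftrightarrow> P ?a ?b")
proof -
  have "hcoord v (z - p) = (2*a - 1) * \<epsilon> \<and> vcoord v (z - p) = (2*b - 1) * \<delta> \<longleftrightarrow> a = ?a \<and> b = ?b"
    for a b
    using assms by (auto simp: field_simps)
  then show ?thesis
    by (simp only: par_pt_centred_iff[OF assms(1)]) blast
qed

lemma rescaled_unit_param_iff:
  fixes h \<epsilon> :: real
  assumes "\<epsilon> > 0"
  shows "0 \<le> (h / \<epsilon> + 1) / 2 \<and> (h / \<epsilon> + 1) / 2 \<le> 1 \<longleftrightarrow> \<bar>h\<bar> \<le> \<epsilon>"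
    and "0 < (h / \<epsilon> + 1) / 2 \<and> (h / \<epsilon> + 1) / 2 < 1 \<longleftrightarrow> \<bar>h\<bar> < \<epsilon>"
    and "(h / \<epsilon> + 1) / 2 = 0 \<longleftrightarrow> h = -\<epsilon>"
    and "(h / \<epsilon> + 1) / 2 = 1 \<longleftrightarrow> h = \<epsilon>"
  using assms by (auto simp: field_simps abs_le_iff abs_less_iff)

lemma centred_parallelogram_iff:
  fixes v z p :: complex and \<epsilon> \<delta> :: real
  assumes "Im v > 0" "\<epsilon> > 0" "\<delta> > 0"
  defines "c \<equiv> p - of_real \<epsilon> - of_real \<delta> * v" and "u \<equiv> of_real (2*\<delta>) * v"
  shows "z \<in> par_closed c (2*\<epsilon>) u \<longleftrightarrow> \<bar>hcoord v (z - p)\<bar> \<le> \<epsilon> \<and> \<bar>vcoord v (z - p)\<bar> \<le> \<delta>"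
    and "z \<in> par_interior c (2*\<epsilon>) u \<longleftrightarrow> \<bar>hcoord v (z - p)\<bar> < \<epsilon> \<and> \<bar>vcoord v (z - p)\<bar> < \<delta>"
    and "z \<in> par_bottom c (2*\<epsilon>) u \<longleftrightarrow> \<bar>hcoord v (z - p)\<bar> < \<epsilon> \<and> vcoord v (z - p) = -\<delta>"
    and "z \<in> par_top c (2*\<epsilon>) u \<longleftrightarrow> \<bar>hcoord v (z - p)\<bar> < \<epsilon> \<and> vcoord v (z - p) = \<delta>"
    and "z \<in> par_left c (2*\<epsilon>) u \<longleftrightarrow> hcoord v (z - p) = -\<epsilon> \<and> \<bar>vcoord v (z - p)\<bar> < \<delta>"
    and "z \<in> par_right c (2*\<epsilon>) u \<longleftrightarrow> hcoord v (z - p) = \<epsilon> \<and> \<bar>vcoord v (z - p)\<bar> < \<delta>"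
proof -
  have sides:
    "par_bottom c (2*\<epsilon>) u = {par_pt c (2*\<epsilon>) u a b | a b. (0 < a \<and> a < 1) \<and> b = 0}"
    "par_top c (2*\<epsilon>) u = {par_pt c (2*\<epsilon>) u a b | a b. (0 < a \<and> a < 1) \<and> b = 1}"
    "par_left c (2*\<epsilon>) u = {par_pt c (2*\<epsilon>) u a b | a b. a = 0 \<and> (0 < b \<and> b < 1)}"
    "par_right c (2*\<epsilon>) u = {par_pt c (2*\<epsilon>) u a b | a b. a = 1 \<and> (0 < b \<and> b < 1)}"
    unfolding par_bottom_def par_top_def par_left_def par_right_def by blast+
  have "Im v \<noteq> 0" "\<epsilon> \<noteq> 0" "\<delta> \<noteq> 0"
    using assms(1-3) by auto
  note ex_iff = ex_centred_par_pt_iff[OF this, where p = p, folded c_def u_def]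
  show "z \<in> par_closed c (2*\<epsilon>) u \<longleftrightarrow> \<bar>hcoord v (z - p)\<bar> \<le> \<epsilon> \<and> \<bar>vcoord v (z - p)\<bar> \<le> \<delta>"
    and "z \<in> par_interior c (2*\<epsilon>) u \<longleftrightarrow> \<bar>hcoord v (z - p)\<bar> < \<epsilon> \<and> \<bar>vcoord v (z - p)\<bar> < \<delta>"
    and "z \<in> par_bottom c (2*\<epsilon>) u \<longleftrightarrow> \<bar>hcoord v (z - p)\<bar> < \<epsilon> \<and> vcoord v (z - p) = -\<delta>"
    and "z \<in> par_top c (2*\<epsilon>) u \<longleftrightarrow> \<bar>hcoord v (z - p)\<bar> < \<epsilon> \<and> vcoord v (z - p) = \<delta>"
    and "z \<in> par_left c (2*\<epsilon>) u \<longleftrightarrow> hcoord v (z - p) = -\<epsilon> \<and> \<bar>vcoord v (z - p)\<bar> < \<delta>"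
    and "z \<in> par_right c (2*\<epsilon>) u \<longleftrightarrow> hcoord v (z - p) = \<epsilon> \<and> \<bar>vcoord v (z - p)\<bar> < \<delta>"
    unfolding sides par_closed_def par_interior_def
    using rescaled_unit_param_iff[OF assms(2)] rescaled_unit_param_iff[OF assms(3)]
    by (simp_all only: mem_Collect_eq ex_iff order_less_imp_not_eq2 not_False_eq_True) blast+
qed

section \<open>A transverse double point\<close>

locale transverse_double_point =
  fixes \<gamma> \<gamma>' :: "real \<Rightarrow> complex" and p v :: complex and s t \<sigma> :: real
  assumes periodic: "periodic_fun_simple' \<gamma>"
    and has_deriv: "\<And>x. (\<gamma> has_vector_derivative \<gamma>' x) (at x)"
    and deriv_cont: "\<And>x. isCont \<gamma>' x"
    and params: "s < t" "t < s + 1"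
    and at_s: "\<gamma> s = p" and at_t: "\<gamma> t = p"
    and preimage_p: "\<And>x. \<gamma> x = p \<Longrightarrow> \<exists>k::int. x = s + of_int k \<or> x = t + of_int k"
    and Im_v: "Im v > 0"
    and tangent_s: "\<gamma>' s = of_real \<sigma> * v" and sign_tangent_s: "\<bar>\<sigma>\<bar> = 1"
    and transversal: "hcoord v (\<gamma>' t) \<noteq> 0"
begin

definition X :: "real \<Rightarrow> real" where "X x = hcoord v (\<gamma> x - p)"
definition Y :: "real \<Rightarrow> real" where "Y x = vcoord v (\<gamma> x - p)"

definition \<alpha> :: real where "\<alpha> = \<bar>hcoord v (\<gamma>' t)\<bar>"
definition \<tau> :: real where "\<tau> = sgn (hcoord v (\<gamma>' t))"
definition M :: real where "M = \<bar>vcoord v (\<gamma>' t)\<bar> + 1"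
definition \<kappa> :: real where "\<kappa> = \<alpha> / (8 * M)"

lemma \<alpha>_pos: "0 < \<alpha>" and M_ge_1: "1 \<le> M"
  using transversal by (auto simp: \<alpha>_def M_def)

lemma \<kappa>_pos: "0 < \<kappa>" and \<kappa>_M: "\<kappa> * M = \<alpha> / 8"
  using \<alpha>_pos M_ge_1 by (simp_all add: \<kappa>_def)

lemma \<tau>_hcoord: "\<tau> * hcoord v (\<gamma>' t) = \<alpha>" and abs_\<tau>: "\<bar>\<tau>\<bar> = 1"
  using transversal by (simp_all add: \<tau>_def \<alpha>_def abs_sgn abs_sgn_eq)

lemma coords_at_params: "X s = 0" "Y s = 0" "X t = 0" "Y t = 0"
  using at_s at_t by (simp_all add: X_def Y_def hcoord_def vcoord_def)

lemma has_real_derivative_X: "(X has_real_derivative hcoord v (\<gamma>' x)) (at x)"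
  and has_real_derivative_Y: "(Y has_real_derivative vcoord v (\<gamma>' x)) (at x)"
  unfolding X_def[abs_def] Y_def[abs_def] using has_real_derivative_coords[OF has_deriv] by blast+

lemma tendsto_coords_deriv:
  "((\<lambda>x. hcoord v (\<gamma>' x)) \<longlongrightarrow> hcoord v (\<gamma>' a)) (nhds a)"
  "((\<lambda>x. vcoord v (\<gamma>' x)) \<longlongrightarrow> vcoord v (\<gamma>' a)) (nhds a)"
  using bounded_linear.isCont[OF bounded_linear_hcoord deriv_cont]
    bounded_linear.isCont[OF bounded_linear_vcoord deriv_cont]
  by (simp_all add: tendsto_nhds_iff isCont_def)

text \<open>\<open>\<kappa>\<close> is chosen so that \<open>\<kappa> * M < (1/2) * (\<alpha>/2)\<close>, the hypothesis of
  \<open>transverse_crossing\<close> that separates the two branches on a crossing window.\<close>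

definition crossing_window :: "real \<Rightarrow> bool" where
  "crossing_window \<eta> \<longleftrightarrow> 0 < \<eta> \<and> 3 * \<eta> \<le> t - s \<and> 3 * \<eta> \<le> s + 1 - t \<and>
     (\<forall>x \<in> {s-\<eta>..s+\<eta>}. 1/2 \<le> \<sigma> * vcoord v (\<gamma>' x) \<and> \<bar>hcoord v (\<gamma>' x)\<bar> \<le> \<kappa>) \<and>
     (\<forall>x \<in> {t-\<eta>..t+\<eta>}. \<alpha>/2 \<le> \<tau> * hcoord v (\<gamma>' x) \<and> \<bar>vcoord v (\<gamma>' x)\<bar> \<le> M)"

lemma eventually_near_s: "\<forall>\<^sub>F x in nhds s. 1/2 < \<sigma> * vcoord v (\<gamma>' x) \<and> \<bar>hcoord v (\<gamma>' x)\<bar> < \<kappa>"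
proof -
  have "\<sigma> * vcoord v (\<gamma>' s) = 1" "hcoord v (\<gamma>' s) = 0"
    using tangent_s Im_v coords_oblique_combination[of v 0 \<sigma>]
      abs_mult_self_eq[of \<sigma>, unfolded sign_tangent_s] by auto
  then show ?thesis
    using tendsto_mult_left[OF tendsto_coords_deriv(2), of \<sigma> s]
      tendsto_rabs[OF tendsto_coords_deriv(1)[of s]] \<kappa>_pos
    by (intro eventually_conj order_tendstoD) auto
qed

lemma eventually_near_t: "\<forall>\<^sub>F x in nhds t. \<alpha>/2 < \<tau> * hcoord v (\<gamma>' x) \<and> \<bar>vcoord v (\<gamma>' x)\<bar> < M"
  using tendsto_mult_left[OF tendsto_coords_deriv(1), of \<tau> t]
    tendsto_rabs[OF tendsto_coords_deriv(2)[of t]] \<tau>_hcoord \<alpha>_pos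
  by (intro eventually_conj order_tendstoD) (auto simp: M_def)

lemma crossing_window_exists: "\<exists>\<eta>. crossing_window \<eta>"
proof -
  obtain d1 where d1: "0 < d1"
    "\<And>x. dist x s < d1 \<Longrightarrow> 1/2 < \<sigma> * vcoord v (\<gamma>' x) \<and> \<bar>hcoord v (\<gamma>' x)\<bar> < \<kappa>"
    using eventually_near_s unfolding eventually_nhds_metric by blast
  obtain d2 where d2: "0 < d2"
    "\<And>x. dist x t < d2 \<Longrightarrow> \<alpha>/2 < \<tau> * hcoord v (\<gamma>' x) \<and> \<bar>vcoord v (\<gamma>' x)\<bar> < M"
    using eventually_near_t unfolding eventually_nhds_metric by blast
  define \<eta> where "\<eta> = min (min (d1/2) (d2/2)) (min ((t - s)/3) ((s + 1 - t)/3))"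
  have "\<eta> < d1" "\<eta> < d2"
    using d1(1) d2(1) by (auto simp: \<eta>_def min_def)
  have "crossing_window \<eta>"
    unfolding crossing_window_def
  proof (intro conjI ballI)
    show "0 < \<eta>" "3 * \<eta> \<le> t - s" "3 * \<eta> \<le> s + 1 - t"
      using d1(1) d2(1) params by (auto simp: \<eta>_def min_def)
    show "1/2 \<le> \<sigma> * vcoord v (\<gamma>' x)" "\<bar>hcoord v (\<gamma>' x)\<bar> \<le> \<kappa>" if "x \<in> {s-\<eta>..s+\<eta>}" for x
    proof -
      have "dist x s < d1"
        using that \<open>\<eta> < d1\<close> by (auto simp: dist_real_def abs_le_iff)
      then show "1/2 \<le> \<sigma> * vcoord v (\<gamma>' x)" "\<bar>hcoord v (\<gamma>' x)\<bar> \<le> \<kappa>"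
        using d1(2) by fastforce+
    qed
    show "\<alpha>/2 \<le> \<tau> * hcoord v (\<gamma>' x)" "\<bar>vcoord v (\<gamma>' x)\<bar> \<le> M" if "x \<in> {t-\<eta>..t+\<eta>}" for x
    proof -
      have "dist x t < d2"
        using that \<open>\<eta> < d2\<close> by (auto simp: dist_real_def abs_le_iff)
      then show "\<alpha>/2 \<le> \<tau> * hcoord v (\<gamma>' x)" "\<bar>vcoord v (\<gamma>' x)\<bar> \<le> M"
        using d2(2) by fastforce+
    qed
  qed
  then show ?thesis ..
qed

lemma is_double_point_p: "is_double_point \<gamma> p"
proof -
  interpret per: periodic_fun_simple' \<gamma> by (fact periodic)
  have "\<gamma> (frac x) = \<gamma> x" for x
    using per.minus_of_int[of x "\<lfloor>x\<rfloor>"] by (simp add: frac_def)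
  moreover have "frac s \<noteq> frac t"
  proof
    assume "frac s = frac t"
    then have "t - s = of_int (\<lfloor>t\<rfloor> - \<lfloor>s\<rfloor>)"
      by (simp add: frac_def)
    then have "frac (t - s) = 0"
      by simp
    moreover have "frac (t - s) = t - s"
      using params by simp
    ultimately show False
      using params by simp
  qed
  ultimately show ?thesis
    unfolding is_double_point_def using at_s at_t frac_ge_0 frac_lt_1 by metis
qed

end

section \<open>The parallelogram\<close>

text \<open>On the window around \<open>s\<close>, \<open>|Y|\<close> reaches \<open>\<delta>\<close>
  while \<open>|X| \<le> 2\<kappa>\<delta> < \<epsilon>\<close>; on the window around \<open>t\<close>, \<open>|X|\<close> reaches \<open>\<epsilon>\<close> while
  \<open>|Y| \<le> 2M\<epsilon>/\<alpha> < \<delta>\<close>; \<open>far\<close> keeps the rest of the curve outside the box.\<close>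

locale transverse_box = transverse_double_point +
  fixes \<eta> \<delta> \<epsilon> :: real
  assumes window: "crossing_window \<eta>"
    and \<delta>_pos: "0 < \<delta>" and \<delta>_le: "2 * \<delta> \<le> \<eta>"
    and \<epsilon>_bounds: "2 * \<kappa> * \<delta> < \<epsilon>" "2 * \<epsilon> \<le> \<alpha> * \<eta>" "2 * M * \<epsilon> < \<alpha> * \<delta>"
    and far: "\<And>x. x \<in> {s+\<eta>..t-\<eta>} \<union> {t+\<eta>..s+1-\<eta>} \<Longrightarrow> \<epsilon> + \<delta> * cmod v < cmod (\<gamma> x - p)"
begin

lemma \<eta>_pos: "0 < \<eta>" and \<eta>_gaps: "3 * \<eta> \<le> t - s" "3 * \<eta> \<le> s + 1 - t"
  and near_s: "\<And>x. x \<in> {s-\<eta>..s+\<eta>} \<Longrightarrow> 1/2 \<le> \<sigma> * vcoord v (\<gamma>' x) \<and> \<bar>hcoord v (\<gamma>' x)\<bar> \<le> \<kappa>"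
  and near_t: "\<And>x. x \<in> {t-\<eta>..t+\<eta>} \<Longrightarrow> \<alpha>/2 \<le> \<tau> * hcoord v (\<gamma>' x) \<and> \<bar>vcoord v (\<gamma>' x)\<bar> \<le> M"
  using window by (simp_all add: crossing_window_def)

lemma \<epsilon>_pos: "0 < \<epsilon>"
  using \<epsilon>_bounds(1) \<kappa>_pos \<delta>_pos by (smt (verit) mult_pos_pos)

lemma branch_s_bounds:
  assumes "x \<in> {s-\<eta>..s+\<eta>}"
  shows "\<bar>x - s\<bar> / 2 \<le> \<bar>Y x\<bar>" and "\<bar>X x\<bar> \<le> \<kappa> * \<bar>x - s\<bar>"
proof -
  have "1/2 * \<bar>x - s\<bar> \<le> \<bar>\<sigma> * Y x\<bar>"
    by (rule dist_le_of_deriv_ge[where F' = "\<lambda>x. \<sigma> * vcoord v (\<gamma>' x)"])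
      (use near_s coords_at_params assms in \<open>auto intro: DERIV_cmult has_real_derivative_Y\<close>)
  then show "\<bar>x - s\<bar> / 2 \<le> \<bar>Y x\<bar>"
    using sign_tangent_s by (simp add: abs_mult)
  show "\<bar>X x\<bar> \<le> \<kappa> * \<bar>x - s\<bar>"
    by (rule abs_le_of_deriv_bounded[where G' = "\<lambda>x. hcoord v (\<gamma>' x)"])
      (use near_s coords_at_params assms has_real_derivative_X in auto)
qed

lemma branch_t_bounds:
  assumes "x \<in> {t-\<eta>..t+\<eta>}"
  shows "\<alpha>/2 * \<bar>x - t\<bar> \<le> \<bar>X x\<bar>" and "\<bar>Y x\<bar> \<le> M * \<bar>x - t\<bar>"
proof -
  have "\<alpha>/2 * \<bar>x - t\<bar> \<le> \<bar>\<tau> * X x\<bar>"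
    by (rule dist_le_of_deriv_ge[where F' = "\<lambda>x. \<tau> * hcoord v (\<gamma>' x)"])
      (use near_t coords_at_params assms in \<open>auto intro: DERIV_cmult has_real_derivative_X\<close>)
  then show "\<alpha>/2 * \<bar>x - t\<bar> \<le> \<bar>X x\<bar>"
    using abs_\<tau> by (simp add: abs_mult)
  show "\<bar>Y x\<bar> \<le> M * \<bar>x - t\<bar>"
    by (rule abs_le_of_deriv_bounded[where G' = "\<lambda>x. vcoord v (\<gamma>' x)"])
      (use near_t coords_at_params assms has_real_derivative_Y in auto)
qed

lemma inj_on_branch_s: "inj_on \<gamma> {s-\<eta>..s+\<eta>}"
proof -
  have "strict_mono_on {s-\<eta>..s+\<eta>} (\<lambda>x. \<sigma> * Y x)"
    by (rule strict_mono_on_of_deriv_pos)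
      (use near_s in \<open>force intro: DERIV_cmult has_real_derivative_Y\<close>)
  then have "inj_on ((\<lambda>z. \<sigma> * vcoord v (z - p)) \<circ> \<gamma>) {s-\<eta>..s+\<eta>}"
    unfolding Y_def o_def by (rule strict_mono_on_imp_inj_on)
  then show ?thesis
    by (rule inj_on_imageI2)
qed

lemma inj_on_branch_t: "inj_on \<gamma> {t-\<eta>..t+\<eta>}"
proof -
  have "strict_mono_on {t-\<eta>..t+\<eta>} (\<lambda>x. \<tau> * X x)"
    by (rule strict_mono_on_of_deriv_pos)
      (use near_t \<alpha>_pos in \<open>force intro: DERIV_cmult has_real_derivative_X\<close>)
  then have "inj_on ((\<lambda>z. \<tau> * hcoord v (z - p)) \<circ> \<gamma>) {t-\<eta>..t+\<eta>}"
    unfolding X_def o_def by (rule strict_mono_on_imp_inj_on)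
  then show ?thesis
    by (rule inj_on_imageI2)
qed

lemma branches_meet_only_at_params:
  assumes "x \<in> {s-\<eta>..s+\<eta>}" "y \<in> {t-\<eta>..t+\<eta>}" "\<gamma> x = \<gamma> y"
  shows "x = s \<and> y = t"
proof (rule transverse_crossing)
  have "X x = X y" "Y x = Y y"
    using assms(3) by (simp_all add: X_def Y_def)
  then show "\<alpha>/2 * \<bar>y - t\<bar> \<le> \<bar>X x\<bar>" "\<bar>Y x\<bar> \<le> M * \<bar>y - t\<bar>"
    using branch_t_bounds[OF assms(2)] by simp_all
  show "1/2 * \<bar>x - s\<bar> \<le> \<bar>Y x\<bar>" "\<bar>X x\<bar> \<le> \<kappa> * \<bar>x - s\<bar>"
    using branch_s_bounds[OF assms(1)] by simp_all
  show "0 < (1/2::real)" "0 \<le> \<kappa>" "\<kappa> * M < 1/2 * (\<alpha>/2)"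
    using \<kappa>_pos \<kappa>_M \<alpha>_pos by simp_all
qed

lemma X_small_on_branch_s:
  assumes "x \<in> {s-\<eta>..s+\<eta>}" "\<bar>Y x\<bar> \<le> \<delta>"
  shows "\<bar>X x\<bar> < \<epsilon>"
proof -
  have "\<bar>x - s\<bar> \<le> 2 * \<delta>"
    using branch_s_bounds(1)[OF assms(1)] assms(2) by simp
  then have "\<kappa> * \<bar>x - s\<bar> \<le> 2 * \<kappa> * \<delta>"
    using \<kappa>_pos by (simp add: mult_left_mono)
  then show ?thesis
    using branch_s_bounds(2)[OF assms(1)] \<epsilon>_bounds(1) by linarith
qed

lemma Y_small_on_branch_t:
  assumes "x \<in> {t-\<eta>..t+\<eta>}" "\<bar>X x\<bar> \<le> \<epsilon>"
  shows "\<bar>Y x\<bar> < \<delta>"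
proof -
  have "\<alpha> * \<bar>x - t\<bar> \<le> 2 * \<epsilon>"
    using branch_t_bounds(1)[OF assms(1)] assms(2) by simp
  then have "\<alpha> * (M * \<bar>x - t\<bar>) \<le> 2 * M * \<epsilon>"
    using M_ge_1 by (simp add: mult.left_commute mult_left_mono)
  with \<epsilon>_bounds(3) \<alpha>_pos have "M * \<bar>x - t\<bar> < \<delta>"
    by (smt (verit) mult_le_cancel_left_pos)
  then show ?thesis
    using branch_t_bounds(2)[OF assms(1)] by linarith
qed

definition box_corner :: complex where "box_corner = p - of_real \<epsilon> - of_real \<delta> * v"
definition box_side :: complex where "box_side = of_real (2*\<delta>) * v"

abbreviation "box_closed \<equiv> par_closed box_corner (2*\<epsilon>) box_side"
abbreviation "box_interior \<equiv> par_interior box_corner (2*\<epsilon>) box_side"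
abbreviation "box_bottom \<equiv> par_bottom box_corner (2*\<epsilon>) box_side"
abbreviation "box_top \<equiv> par_top box_corner (2*\<epsilon>) box_side"
abbreviation "box_left \<equiv> par_left box_corner (2*\<epsilon>) box_side"
abbreviation "box_right \<equiv> par_right box_corner (2*\<epsilon>) box_side"

abbreviation "arc_s \<equiv> {x \<in> {s-\<eta>..s+\<eta>}. \<bar>Y x\<bar> \<le> \<delta>}"
abbreviation "arc_t \<equiv> {x \<in> {t-\<eta>..t+\<eta>}. \<bar>X x\<bar> \<le> \<epsilon>}"

lemma box_iff:
  "\<gamma> x \<in> box_closed \<longleftrightarrow> \<bar>X x\<bar> \<le> \<epsilon> \<and> \<bar>Y x\<bar> \<le> \<delta>"
  "\<gamma> x \<in> box_interior \<longleftrightarrow> \<bar>X x\<bar> < \<epsilon> \<and> \<bar>Y x\<bar> < \<delta>"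
  "\<gamma> x \<in> box_bottom \<longleftrightarrow> \<bar>X x\<bar> < \<epsilon> \<and> Y x = -\<delta>"
  "\<gamma> x \<in> box_top \<longleftrightarrow> \<bar>X x\<bar> < \<epsilon> \<and> Y x = \<delta>"
  "\<gamma> x \<in> box_left \<longleftrightarrow> X x = -\<epsilon> \<and> \<bar>Y x\<bar> < \<delta>"
  "\<gamma> x \<in> box_right \<longleftrightarrow> X x = \<epsilon> \<and> \<bar>Y x\<bar> < \<delta>"
  unfolding box_corner_def box_side_def X_def Y_def
  using centred_parallelogram_iff[OF Im_v \<epsilon>_pos \<delta>_pos, of "\<gamma> x" p] by blast+

lemma box_near_params_iff:
  assumes "y \<in> {s-\<eta>..<s-\<eta>+1}"
  shows "\<bar>X y\<bar> \<le> \<epsilon> \<and> \<bar>Y y\<bar> \<le> \<delta> \<longleftrightarrow>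
    y \<in> arc_s \<union> arc_t"
proof
  assume in_box: "\<bar>X y\<bar> \<le> \<epsilon> \<and> \<bar>Y y\<bar> \<le> \<delta>"
  have "cmod (\<gamma> y - p) \<le> \<epsilon> + \<delta> * cmod v"
    using norm_le_coords[of v "\<gamma> y - p"] Im_v in_box
    by (smt (verit, best) X_def Y_def mult_right_mono norm_ge_zero)
  then have "y \<notin> {s+\<eta>..t-\<eta>} \<union> {t+\<eta>..s+1-\<eta>}"
    using far by fastforce
  with assms in_box show "y \<in> arc_s \<union> arc_t"
    by auto
next
  assume "y \<in> arc_s \<union> arc_t"
  then show "\<bar>X y\<bar> \<le> \<epsilon> \<and> \<bar>Y y\<bar> \<le> \<delta>"
    using X_small_on_branch_s Y_small_on_branch_t by fastforce
qed

lemma box_preimage: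
  "{x. \<gamma> x \<in> box_closed} =
   {x. \<exists>k::int. x - of_int k \<in> arc_s \<union> arc_t}"
proof (rule periodic_preimage[OF periodic])
  show "arc_s \<union> arc_t \<subseteq> {s-\<eta>..<s-\<eta>+1}"
    using \<eta>_pos \<eta>_gaps by auto
  show "\<gamma> y \<in> box_closed \<longleftrightarrow>
      y \<in> arc_s \<union> arc_t"
    if "y \<in> {s-\<eta>..<s-\<eta>+1}" for y
    using box_iff(1) box_near_params_iff[OF that] by simp
qed

lemma branch_s_arc:
  obtains lo hi where "s-\<eta> \<le> lo" "lo < s" "s < hi" "hi \<le> s+\<eta>"
    "arc_s = {lo..hi}"
    "\<gamma> ` {lo<..<hi} \<subseteq> box_interior"
    "(\<gamma> lo \<in> box_bottom \<and> \<gamma> hi \<in> box_top) \<or>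
     (\<gamma> lo \<in> box_top \<and> \<gamma> hi \<in> box_bottom)"
proof -
  have abs_Y: "\<bar>\<sigma> * Y x\<bar> = \<bar>Y x\<bar>" for x
    using sign_tangent_s by (simp add: abs_mult)
  have deriv: "((\<lambda>x. \<sigma> * Y x) has_real_derivative \<sigma> * vcoord v (\<gamma>' x)) (at x)" for x
    by (intro DERIV_cmult has_real_derivative_Y)
  have "\<sigma> * Y s = 0" "\<delta> \<le> 1/2 * \<eta>"
    using coords_at_params \<delta>_le by simp_all
  then obtain lo hi where arc: "s-\<eta> \<le> lo" "lo < s" "s < hi" "hi \<le> s+\<eta>" "\<sigma> * Y lo = -\<delta>" "\<sigma> * Y hi = \<delta>"
    "{x \<in> {s-\<eta>..s+\<eta>}. \<bar>\<sigma> * Y x\<bar> \<le> \<delta>} = {lo..hi}"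
    "{x \<in> {s-\<eta>..s+\<eta>}. \<bar>\<sigma> * Y x\<bar> < \<delta>} = {lo<..<hi}"
    using level_interval[where c = s and \<eta> = \<eta> and m = "1/2", OF deriv conjunct1[OF near_s]] \<delta>_pos
    by auto
  show thesis
  proof (rule that[OF arc(1-4)])
    show "arc_s = {lo..hi}"
      using arc(7) by (simp only: abs_Y)
    show "\<gamma> ` {lo<..<hi} \<subseteq> box_interior"
    proof
      fix z assume "z \<in> \<gamma> ` {lo<..<hi}"
      then obtain x where "x \<in> {s-\<eta>..s+\<eta>}" "\<bar>Y x\<bar> < \<delta>" "z = \<gamma> x"
        using arc(8) by (auto simp only: abs_Y)
      then show "z \<in> box_interior"
        using X_small_on_branch_s box_iff(2) by simp
    qed
    have "\<bar>X lo\<bar> < \<epsilon>" "\<bar>X hi\<bar> < \<epsilon>" "\<bar>Y lo\<bar> = \<delta>" "\<bar>Y hi\<bar> = \<delta>"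
      using arc(1-6) abs_Y[of lo] abs_Y[of hi] \<delta>_pos X_small_on_branch_s[of lo] X_small_on_branch_s[of hi]
      by simp_all
    moreover have "\<sigma> = 1 \<or> \<sigma> = -1"
      using sign_tangent_s by linarith
    ultimately show "(\<gamma> lo \<in> box_bottom \<and> \<gamma> hi \<in> box_top) \<or>
      (\<gamma> lo \<in> box_top \<and> \<gamma> hi \<in> box_bottom)"
      using arc(5,6) box_iff(3,4) by auto
  qed
qed

lemma branch_t_arc:
  obtains lo hi where "t-\<eta> \<le> lo" "lo < t" "t < hi" "hi \<le> t+\<eta>"
    "arc_t = {lo..hi}"
    "\<gamma> ` {lo<..<hi} \<subseteq> box_interior"
    "(\<gamma> lo \<in> box_left \<and> \<gamma> hi \<in> box_right) \<or>
     (\<gamma> lo \<in> box_right \<and> \<gamma> hi \<in> box_left)"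
proof -
  have abs_X: "\<bar>\<tau> * X x\<bar> = \<bar>X x\<bar>" for x
    using abs_\<tau> by (simp add: abs_mult)
  have deriv: "((\<lambda>x. \<tau> * X x) has_real_derivative \<tau> * hcoord v (\<gamma>' x)) (at x)" for x
    by (intro DERIV_cmult has_real_derivative_X)
  have "\<tau> * X t = 0" "0 < \<alpha>/2" "\<epsilon> \<le> \<alpha>/2 * \<eta>"
    using coords_at_params \<alpha>_pos \<epsilon>_bounds(2) by simp_all
  then obtain lo hi where arc: "t-\<eta> \<le> lo" "lo < t" "t < hi" "hi \<le> t+\<eta>" "\<tau> * X lo = -\<epsilon>" "\<tau> * X hi = \<epsilon>"
    "{x \<in> {t-\<eta>..t+\<eta>}. \<bar>\<tau> * X x\<bar> \<le> \<epsilon>} = {lo..hi}"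
    "{x \<in> {t-\<eta>..t+\<eta>}. \<bar>\<tau> * X x\<bar> < \<epsilon>} = {lo<..<hi}"
    using level_interval[where c = t and \<eta> = \<eta> and m = "\<alpha>/2", OF deriv conjunct1[OF near_t]] \<epsilon>_pos
    by auto
  show thesis
  proof (rule that[OF arc(1-4)])
    show "arc_t = {lo..hi}"
      using arc(7) by (simp only: abs_X)
    show "\<gamma> ` {lo<..<hi} \<subseteq> box_interior"
    proof
      fix z assume "z \<in> \<gamma> ` {lo<..<hi}"
      then obtain x where "x \<in> {t-\<eta>..t+\<eta>}" "\<bar>X x\<bar> < \<epsilon>" "z = \<gamma> x"
        using arc(8) by (auto simp only: abs_X)
      then show "z \<in> box_interior"
        using Y_small_on_branch_t box_iff(2) by simp
    qed
    have "\<bar>Y lo\<bar> < \<delta>" "\<bar>Y hi\<bar> < \<delta>" "\<bar>X lo\<bar> = \<epsilon>" "\<bar>X hi\<bar> = \<epsilon>"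
      using arc(1-6) abs_X[of lo] abs_X[of hi] \<epsilon>_pos Y_small_on_branch_t[of lo] Y_small_on_branch_t[of hi]
      by simp_all
    moreover have "\<tau> = 1 \<or> \<tau> = -1"
      using abs_\<tau> by linarith
    ultimately show "(\<gamma> lo \<in> box_left \<and> \<gamma> hi \<in> box_right) \<or>
      (\<gamma> lo \<in> box_right \<and> \<gamma> hi \<in> box_left)"
      using arc(5,6) box_iff(5,6) by auto
  qed
qed

lemma near_params_collision:
  assumes "a \<in> {s-\<eta>..s+\<eta>} \<union> {t-\<eta>..t+\<eta>}" "b \<in> {s-\<eta>..s+\<eta>} \<union> {t-\<eta>..t+\<eta>}" "\<gamma> a = \<gamma> b"
  shows "a = b \<or> \<gamma> a = p"
proof -
  consider "a \<in> {s-\<eta>..s+\<eta>}" "b \<in> {s-\<eta>..s+\<eta>}" | "a \<in> {t-\<eta>..t+\<eta>}" "b \<in> {t-\<eta>..t+\<eta>}"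
    | "a \<in> {s-\<eta>..s+\<eta>}" "b \<in> {t-\<eta>..t+\<eta>}" | "a \<in> {t-\<eta>..t+\<eta>}" "b \<in> {s-\<eta>..s+\<eta>}"
    using assms(1,2) by blast
  then show ?thesis
  proof cases
    case 1
    then show ?thesis
      using inj_on_branch_s assms(3) by (simp add: inj_on_eq_iff)
  next
    case 2
    then show ?thesis
      using inj_on_branch_t assms(3) by (simp add: inj_on_eq_iff)
  next
    case 3
    then show ?thesis
      using branches_meet_only_at_params assms(3) at_s by blast
  next
    case 4
    then show ?thesis
      using branches_meet_only_at_params[of b a] assms(3) at_t by simp
  qed
qed

lemma box_double_points:
  "{q \<in> box_closed. is_double_point \<gamma> q} = {p}"
proof (intro equalityI subsetI)
  interpret per: periodic_fun_simple' \<gamma> by (fact periodic)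
  fix q assume "q \<in> {q \<in> box_closed. is_double_point \<gamma> q}"
  then obtain x y where xy: "x \<in> {0..<1}" "y \<in> {0..<1}" "x \<noteq> y" "\<gamma> x = q" "\<gamma> y = q"
    and q: "q \<in> box_closed"
    unfolding is_double_point_def by auto
  obtain k :: int where "x - of_int k \<in> {s-\<eta>..s+\<eta>} \<union> {t-\<eta>..t+\<eta>}"
    using box_preimage q xy(4) by blast
  moreover obtain l :: int where "y - of_int l \<in> {s-\<eta>..s+\<eta>} \<union> {t-\<eta>..t+\<eta>}"
    using box_preimage q xy(5) by blast
  moreover have "\<gamma> (x - of_int k) = \<gamma> (y - of_int l)"
    using xy(4,5) per.minus_of_int by simp
  ultimately have "x - of_int k = y - of_int l \<or> \<gamma> (x - of_int k) = p"
    by (rule near_params_collision)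
  moreover have "x - of_int k \<noteq> y - of_int l"
  proof
    assume "x - of_int k = y - of_int l"
    then have "x - y = of_int (k - l)"
      by (simp add: algebra_simps)
    then have "x - y \<in> \<int>"
      by simp
    then show False
      using eq_of_diff_Ints_unit_interval xy(1-3) by blast
  qed
  ultimately show "q \<in> {p}"
    using xy(4) per.minus_of_int by simp
next
  fix q assume "q \<in> {p}"
  moreover have "p \<in> box_closed"
    using box_iff(1)[of s] at_s coords_at_params \<epsilon>_pos \<delta>_pos by simp
  ultimately show "q \<in> {q \<in> box_closed. is_double_point \<gamma> q}"
    using is_double_point_p by simp
qed

theorem intersection_parallelogram_box:
  "intersection_parallelogram \<gamma> p box_corner (2*\<epsilon>) box_side"
proof -
  obtain lo1 hi1 where s_arc: "s-\<eta> \<le> lo1" "lo1 < s" "s < hi1" "hi1 \<le> s+\<eta>"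
    "arc_s = {lo1..hi1}"
    "\<gamma> ` {lo1<..<hi1} \<subseteq> box_interior"
    "(\<gamma> lo1 \<in> box_bottom \<and> \<gamma> hi1 \<in> box_top) \<or>
     (\<gamma> lo1 \<in> box_top \<and> \<gamma> hi1 \<in> box_bottom)"
    by (rule branch_s_arc)
  obtain lo2 hi2 where t_arc: "t-\<eta> \<le> lo2" "lo2 < t" "t < hi2" "hi2 \<le> t+\<eta>"
    "arc_t = {lo2..hi2}"
    "\<gamma> ` {lo2<..<hi2} \<subseteq> box_interior"
    "(\<gamma> lo2 \<in> box_left \<and> \<gamma> hi2 \<in> box_right) \<or>
     (\<gamma> lo2 \<in> box_right \<and> \<gamma> hi2 \<in> box_left)"
    by (rule branch_t_arc)
  have order: "lo1 < hi1" "hi1 < lo2" "lo2 < hi2" "hi2 < lo1 + 1"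
    using s_arc(1-4) t_arc(1-4) \<eta>_pos \<eta>_gaps by linarith+
  have shift: "x - of_int k \<in> {a..b} \<longleftrightarrow> x \<in> {a + of_int k..b + of_int k}" for x a b :: real and k :: int
    by auto
  have preimage: "{x. \<gamma> x \<in> box_closed} =
      (\<Union>k::int. {lo1 + of_int k .. hi1 + of_int k} \<union> {lo2 + of_int k .. hi2 + of_int k})"
    unfolding box_preimage s_arc(5) t_arc(5) Un_iff shift by blast
  show ?thesis
    unfolding intersection_parallelogram_def
  proof (intro conjI)
    show "0 < 2*\<epsilon>" "0 < Im box_side"
      using \<epsilon>_pos \<delta>_pos Im_v by (simp_all add: box_side_def)
    show "{q \<in> box_closed. is_double_point \<gamma> q} = {p}"
      by (rule box_double_points)
  qed (use order preimage s_arc(6,7) t_arc(6,7) in blast)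
qed

end

context transverse_double_point
begin

lemma far_params_avoid_p:
  fixes \<eta> :: real
  assumes "0 < \<eta>" "x \<in> {s+\<eta>..t-\<eta>} \<union> {t+\<eta>..s+1-\<eta>}"
  shows "\<gamma> x \<noteq> p"
proof
  assume "\<gamma> x = p"
  then obtain k :: int where "x = s + of_int k \<or> x = t + of_int k"
    using preimage_p by blast
  then have "real_of_int k \<in> {0<..<1} \<or> real_of_int k \<in> {-1<..<0}"
    using assms params by auto
  then show False
    by auto
qed

lemma far_params_bounded_away:
  fixes \<eta> :: real
  assumes "0 < \<eta>"
  obtains r where "0 < r" "\<And>x. x \<in> {s+\<eta>..t-\<eta>} \<union> {t+\<eta>..s+1-\<eta>} \<Longrightarrow> r \<le> cmod (\<gamma> x - p)"
proof -
  define K where "K = {s+\<eta>..t-\<eta>} \<union> {t+\<eta>..s+1-\<eta>}"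
  have "continuous_on K \<gamma>"
    using has_deriv by (meson continuous_at_imp_continuous_on has_vector_derivative_continuous)
  then have "closed (\<gamma> ` K)"
    by (intro compact_imp_closed compact_continuous_image) (simp_all add: K_def compact_Un)
  moreover have "p \<notin> \<gamma> ` K"
    using far_params_avoid_p[OF assms] unfolding K_def by blast
  ultimately show thesis
    using separate_point_closed that unfolding K_def by (metis dist_commute dist_norm image_eqI)
qed

lemma box_parameters_exist:
  assumes "0 < \<eta>" "0 < r"
  obtains \<delta> \<epsilon> where "0 < \<delta>" "2 * \<delta> \<le> \<eta>"
    "2 * \<kappa> * \<delta> < \<epsilon>" "2 * \<epsilon> \<le> \<alpha> * \<eta>" "2 * M * \<epsilon> < \<alpha> * \<delta>" "\<epsilon> + \<delta> * cmod v < r"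
proof -
  define D where "D = 2 * (3 * \<kappa> + cmod v + 1)"
  define \<delta> where "\<delta> = min (\<eta>/2) (r / D)"
  define \<epsilon> where "\<epsilon> = 3 * \<kappa> * \<delta>"
  have D: "3 * \<kappa> + cmod v < D" and D_pos: "0 < D"
    using \<kappa>_pos norm_ge_zero[of v] unfolding D_def by (smt (verit))+
  have "\<delta> \<le> \<eta>/2" "\<delta> \<le> r / D"
    unfolding \<delta>_def by (rule min.cobounded1, rule min.cobounded2)
  moreover have "0 < \<delta>"
    using assms \<kappa>_pos D_pos by (simp add: \<delta>_def)
  ultimately have \<delta>: "0 < \<delta>" "2 * \<delta> \<le> \<eta>" "\<delta> * D \<le> r"
    using D_pos by (simp_all add: pos_le_divide_eq)
  have "\<kappa> * 1 \<le> \<kappa> * M"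
    using M_ge_1 \<kappa>_pos by (intro mult_left_mono) auto
  then have "\<kappa> \<le> \<alpha> / 8"
    using \<kappa>_M by simp
  have "2 * \<epsilon> = 6 * \<kappa> * \<delta>"
    by (simp add: \<epsilon>_def)
  also have "\<dots> \<le> 6 * (\<alpha> / 8) * (\<eta> / 2)"
    using \<open>\<kappa> \<le> \<alpha> / 8\<close> \<delta> \<kappa>_pos by (intro mult_mono) auto
  also have "\<dots> \<le> \<alpha> * \<eta>"
    using \<alpha>_pos assms(1) by simp
  finally have "2 * \<epsilon> \<le> \<alpha> * \<eta>" .
  moreover have "2 * \<kappa> * \<delta> < \<epsilon>" "2 * M * \<epsilon> < \<alpha> * \<delta>"
    using \<delta>(1) \<kappa>_pos \<kappa>_M \<alpha>_pos unfolding \<epsilon>_def by (simp_all add: algebra_simps)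
  moreover have "\<epsilon> + \<delta> * cmod v < r"
  proof -
    have "\<epsilon> + \<delta> * cmod v = \<delta> * (3 * \<kappa> + cmod v)"
      unfolding \<epsilon>_def by (simp add: algebra_simps)
    also have "\<dots> < \<delta> * D"
      using D \<delta>(1) by (rule mult_strict_left_mono)
    finally show ?thesis
      using \<delta>(3) by linarith
  qed
  ultimately show thesis
    using that \<delta>(1,2) by blast
qed

lemma box_exists:
  assumes window: "crossing_window \<eta>"
  obtains \<delta> \<epsilon> where "transverse_box \<gamma> \<gamma>' p v s t \<sigma> \<eta> \<delta> \<epsilon>"
proof -
  have "0 < \<eta>"
    using window by (simp add: crossing_window_def)
  then obtain r where r: "0 < r"
    "\<And>x. x \<in> {s+\<eta>..t-\<eta>} \<union> {t+\<eta>..s+1-\<eta>} \<Longrightarrow> r \<le> cmod (\<gamma> x - p)"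
    using far_params_bounded_away by blast
  obtain \<delta> \<epsilon> where "0 < \<delta>" "2 * \<delta> \<le> \<eta>"
    "2 * \<kappa> * \<delta> < \<epsilon>" "2 * \<epsilon> \<le> \<alpha> * \<eta>" "2 * M * \<epsilon> < \<alpha> * \<delta>" "\<epsilon> + \<delta> * cmod v < r"
    using box_parameters_exist[OF \<open>0 < \<eta>\<close> r(1)] by blast
  with window r(2) have "transverse_box_axioms \<gamma> \<gamma>' p v s t \<sigma> \<eta> \<delta> \<epsilon>"
    by (intro transverse_box_axioms.intro) (auto intro: less_le_trans)
  then show thesis
    using that transverse_double_point_axioms by (blast intro: transverse_box.intro)
qed

theorem has_intersection_parallelogram: "\<exists>c w u. intersection_parallelogram \<gamma> p c w u"
proof -
  obtain \<eta> where "crossing_window \<eta>"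
    using crossing_window_exists ..
  then obtain \<delta> \<epsilon> where "transverse_box \<gamma> \<gamma>' p v s t \<sigma> \<eta> \<delta> \<epsilon>"
    by (rule box_exists)
  then interpret transverse_box \<gamma> \<gamma>' p v s t \<sigma> \<eta> \<delta> \<epsilon> .
  show ?thesis
    using intersection_parallelogram_box by blast
qed

end

section \<open>Knot diagrams\<close>

lemma periodic_vector_derivative:
  assumes "periodic_fun_simple' \<gamma>" and deriv: "\<And>x. (\<gamma> has_vector_derivative \<gamma>' x) (at x)"
  shows "\<gamma>' (x + 1) = \<gamma>' x"
proof -
  interpret per: periodic_fun_simple' \<gamma> by fact
  have "((\<lambda>y. y + 1) has_vector_derivative 1) (at x)"
    by (auto intro!: derivative_eq_intros)
  then have "((\<lambda>y. \<gamma> (y + 1)) has_vector_derivative \<gamma>' (x + 1)) (at x)"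
    using vector_diff_chain_at[of "\<lambda>y. y + 1" 1 x \<gamma> "\<gamma>' (x + 1)"] deriv by (simp add: o_def)
  then have "(\<gamma> has_vector_derivative \<gamma>' (x + 1)) (at x)"
    by (simp add: per.plus_1)
  then show ?thesis
    using deriv vector_derivative_unique_at by blast
qed

lemma intersection_parallelogram_at_transverse_crossing:
  fixes \<gamma> \<gamma>' :: "real \<Rightarrow> complex"
  assumes periodic: "periodic_fun_simple' \<gamma>"
    and deriv: "\<And>x. (\<gamma> has_vector_derivative \<gamma>' x) (at x)" and cont: "\<And>x. isCont \<gamma>' x"
    and ab: "a \<in> {0..<1}" "b \<in> {0..<1}" "a \<noteq> b" and at_a: "\<gamma> a = p" and at_b: "\<gamma> b = p"
    and preimage: "\<And>x. \<gamma> x = p \<Longrightarrow> \<exists>k::int. x = a + of_int k \<or> x = b + of_int k"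
    and not_horizontal: "Im (\<gamma>' a) \<noteq> 0"
    and transversal: "Im (cnj (\<gamma>' a) * \<gamma>' b) \<noteq> 0"
  shows "\<exists>c w u. intersection_parallelogram \<gamma> p c w u"
proof -
  interpret per: periodic_fun_simple' \<gamma> by fact
  define t where "t = (if a < b then b else b + 1)"
  define \<sigma> :: real where "\<sigma> = sgn (Im (\<gamma>' a))"
  define v where "v = of_real \<sigma> * \<gamma>' a"
  have \<sigma>: "\<bar>\<sigma>\<bar> = 1" "\<sigma> * \<sigma> = 1"
    using not_horizontal by (simp_all add: \<sigma>_def abs_sgn_eq sgn_mult_self_eq)
  have "\<gamma> t = p" "\<gamma>' t = \<gamma>' b"
    using at_b per.plus_1 periodic_vector_derivative[OF periodic deriv] by (simp_all add: t_def)
  moreover have "Im v > 0"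
    using not_horizontal abs_sgn[of "Im (\<gamma>' a)"] by (simp add: v_def \<sigma>_def mult.commute)
  moreover have "hcoord v (\<gamma>' b) \<noteq> 0"
  proof -
    have "Im (cnj v * \<gamma>' b) = \<sigma> * Im (cnj (\<gamma>' a) * \<gamma>' b)"
      by (simp add: v_def algebra_simps)
    then show ?thesis
      using hcoord_eq_Im_cnj_mult[of v "\<gamma>' b"] transversal \<open>Im v > 0\<close> \<sigma>(1) by auto
  qed
  moreover have "\<exists>k::int. x = a + of_int k \<or> x = t + of_int k" if px: "\<gamma> x = p" for x
  proof -
    obtain k :: int where "x = a + of_int k \<or> x = b + of_int k"
      using preimage[OF px] by blast
    then have "x = a + of_int k \<or> x = t + of_int k \<or> x = t + of_int (k - 1)"
      by (auto simp: t_def)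
    then show ?thesis
      by blast
  qed
  moreover have "\<gamma>' a = of_real \<sigma> * v"
    using \<sigma>(2) by (simp add: v_def mult.assoc[symmetric] flip: of_real_mult)
  ultimately interpret transverse_double_point \<gamma> \<gamma>' p v a t \<sigma>
    using ab at_a periodic deriv cont \<sigma>(1) by unfold_locales (auto simp: t_def)
  show ?thesis
    by (rule has_intersection_parallelogram)
qed

lemma knot_diagram_periodic: "knot_diagram \<gamma> \<Longrightarrow> periodic_fun_simple' \<gamma>"
  by unfold_locales (simp add: knot_diagram_def)

lemma knot_diagram_continuous_derivative:
  assumes "knot_diagram \<gamma>"
  obtains \<gamma>' where "\<And>x. (\<gamma> has_vector_derivative \<gamma>' x) (at x)" "\<And>x. isCont \<gamma>' x"
proof -
  obtain f :: "nat \<Rightarrow> real \<Rightarrow> complex"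
    where "f 0 = \<gamma>" "\<And>k x. (f k has_vector_derivative f (Suc k) x) (at x)"
    using assms unfolding knot_diagram_def smooth_curve_def by blast
  then show thesis
    using that[of "f 1"] has_vector_derivative_continuous by (metis One_nat_def)
qed

lemma knot_diagram_double_point_preimage:
  assumes "knot_diagram \<gamma>" and st: "s \<in> {0..<1}" "t \<in> {0..<1}" "s \<noteq> t" "\<gamma> s = p" "\<gamma> t = p"
    and "\<gamma> x = p"
  shows "\<exists>k::int. x = s + of_int k \<or> x = t + of_int k"
proof -
  interpret per: periodic_fun_simple' \<gamma>
    using assms(1) by (rule knot_diagram_periodic)
  have no_triple: "\<not> (\<gamma> r = \<gamma> s \<and> \<gamma> s = \<gamma> t)"
    if "r \<in> {0..<1}" "r \<noteq> s" "r \<noteq> t" for r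
    using assms(1) st(1-3) that unfolding knot_diagram_def atLeastLessThan_iff by blast
  have "\<gamma> (frac x) = p"
    using \<open>\<gamma> x = p\<close> per.minus_of_int[of x "\<lfloor>x\<rfloor>"] by (simp add: frac_def)
  then have "frac x = s \<or> frac x = t"
    using no_triple[of "frac x"] st(4,5) frac_ge_0[of x] frac_lt_1[of x] by auto
  then show ?thesis
    by (auto simp: frac_def intro!: exI[of _ "\<lfloor>x\<rfloor>"])
qed

theorem mainTheorem2:
  fixes \<gamma> :: "real \<Rightarrow> complex" and p :: complex
  assumes "knot_diagram \<gamma>"
    and "is_double_point \<gamma> p"
  shows "\<exists>c w v. intersection_parallelogram \<gamma> p c w v"
proof -
  note periodic = knot_diagram_periodic[OF assms(1)]
  obtain \<gamma>' where deriv: "\<And>x. (\<gamma> has_vector_derivative \<gamma>' x) (at x)" and cont: "\<And>x. isCont \<gamma>' x"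
    using knot_diagram_continuous_derivative[OF assms(1)] by blast
  obtain s t where st: "s \<in> {0..<1}" "t \<in> {0..<1}" "s \<noteq> t" "\<gamma> s = p" "\<gamma> t = p"
    using assms(2) unfolding is_double_point_def by auto
  have "Im (cnj (vector_derivative \<gamma> (at s)) * vector_derivative \<gamma> (at t)) \<noteq> 0"
    using assms(1) st unfolding knot_diagram_def by auto
  then have transversal: "Im (cnj (\<gamma>' s) * \<gamma>' t) \<noteq> 0"
    by (simp add: vector_derivative_at[OF deriv])
  note preimage = knot_diagram_double_point_preimage[OF assms(1)]
  show ?thesis
  proof (cases "Im (\<gamma>' s) = 0")
    case False
    show ?thesis
      by (rule intersection_parallelogram_at_transverse_crossing[OF periodic deriv cont st
            preimage[OF st] False transversal])
  next
    case True
    with transversal have "Im (\<gamma>' t) \<noteq> 0" "Im (cnj (\<gamma>' t) * \<gamma>' s) \<noteq> 0"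
      by (simp_all add: algebra_simps)
    then show ?thesis
      using intersection_parallelogram_at_transverse_crossing[OF periodic deriv cont st(2,1)
          st(3)[symmetric] st(5,4) preimage[OF st(2,1) st(3)[symmetric] st(5,4)]] by blast
  qed
qed

end
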